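(* Consider a Markov decision process with stochastic policy $\pi$, transition density $T$ and initial state distribution $\alpha$. Let $0<\beta<\gamma<1$. Let $\rho_T(s,a)$ be the normalized occupancy measure generated by $(\alpha,\pi,T)$ with discount factor $\gamma$, and let $\rho_T^\beta(s,a)$ be the normalized occupancy measure generated by $(\rho_T,\pi,T)$ with discount factor $\beta$ (i.e. trajectories started from $(s_0,a_0)\sim\rho_T$ and continued under $\pi$ and $T$). Then $$D_{TV}(\rho_T\,\|\,\rho_T^\beta)\le\frac{(1-\gamma)\beta}{\gamma-\beta}.$$
   Context: The normalized occupancy measure generated by $(\mu,\pi,T)$ with discount factor $\lambda\in(0,1)$ is $\sum_{t=0}^\infty(1-\lambda)\lambda^t\,\mathbb{P}(s_t=s,a_t=a)$, where the trajectory starts from $\mu$ and evolves by $a_t\sim\pi(\cdot\mid s_t)$, $s_{t+1}\sim T(\cdot\mid s_t,a_t)$. The total variation distance is $D_{TV}(p\,\|\,q)=\frac12\int|p-q|$. *)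

theory Defs
  imports "HOL-Probability.Probability"
begin

(* General (measurable) state space S and action space A, each with a sigma-finite
reference measure.  All distributions are given by densities with respect to these
reference measures: an initial state density alpha, a policy density pi s a
(density of the action a given state s), and a transition density T s a s'
(density of the next state s' given (s,a)). *)

(* One step of the state-action process: if p is the density of (s_t,a_t), then
step p is the density of (s_{t+1},a_{t+1}), where s_{t+1} ~ T(.|s_t,a_t) and
a_{t+1} ~ pi(.|s_{t+1}). *)
definition sa_step ::
  "'s measure \<Rightarrow> 'a measure \<Rightarrow> ('s \<Rightarrow> 'a \<Rightarrow> real) \<Rightarrow> ('s \<Rightarrow> 'a \<Rightarrow> 's \<Rightarrow> real)
   \<Rightarrow> ('s \<times> 'a \<Rightarrow> real) \<Rightarrow> ('s \<times> 'a \<Rightarrow> real)" where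
  "sa_step S A pol T p =
     (\<lambda>(s', a'). enn2real (\<integral>\<^sup>+ x. ennreal (p x * T (fst x) (snd x) s') \<partial>(S \<Otimes>\<^sub>M A)) * pol s' a')"

definition sa_dist ::
  "'s measure \<Rightarrow> 'a measure \<Rightarrow> ('s \<Rightarrow> 'a \<Rightarrow> real) \<Rightarrow> ('s \<Rightarrow> 'a \<Rightarrow> 's \<Rightarrow> real)
   \<Rightarrow> ('s \<times> 'a \<Rightarrow> real) \<Rightarrow> nat \<Rightarrow> ('s \<times> 'a \<Rightarrow> real)" where
  "sa_dist S A pol T p0 t = (sa_step S A pol T ^^ t) p0"

definition occupancy ::
  "'s measure \<Rightarrow> 'a measure \<Rightarrow> ('s \<Rightarrow> 'a \<Rightarrow> real) \<Rightarrow> ('s \<Rightarrow> 'a \<Rightarrow> 's \<Rightarrow> real)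
   \<Rightarrow> real \<Rightarrow> ('s \<times> 'a \<Rightarrow> real) \<Rightarrow> ('s \<times> 'a \<Rightarrow> real)" where
  "occupancy S A pol T lam p0 =
     (\<lambda>x. enn2real (\<Sum>t. ennreal ((1 - lam) * lam ^ t * sa_dist S A pol T p0 t x)))"

definition init_sa :: "('s \<Rightarrow> real) \<Rightarrow> ('s \<Rightarrow> 'a \<Rightarrow> real) \<Rightarrow> ('s \<times> 'a \<Rightarrow> real)" where
  "init_sa alpha pol = (\<lambda>(s, a). alpha s * pol s a)"

definition tv_dist :: "'b measure \<Rightarrow> ('b \<Rightarrow> real) \<Rightarrow> ('b \<Rightarrow> real) \<Rightarrow> real" where
  "tv_dist M p q = 1/2 * (\<integral> x. \<bar>p x - q x\<bar> \<partial>M)"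

end

theory Submission
  imports Defs
begin

text \<open>
  Let P be one step of the state-action chain, \<mu> the initial state-action density and \<rho> its
  \<gamma>-occupancy. P is a contraction for the L1 distance, and \<rho> = (1 - \<gamma>) \<mu> + \<gamma> P \<rho>, so
  \<parallel>\<rho> - P \<rho>\<parallel> \<le> 2 (1 - \<gamma>) and, by the triangle inequality, \<parallel>\<rho> - P^k \<rho>\<parallel> \<le> 2 k (1 - \<gamma>).
  The \<beta>-occupancy of \<rho> is the mixture \<Sum>k. (1 - \<beta>) \<beta>^k P^k \<rho>, so by convexity of the norm
  its distance to \<rho> is at most \<Sum>k. (1 - \<beta>) \<beta>^k 2 k (1 - \<gamma>) = 2 (1 - \<gamma>) \<beta> / (1 - \<beta>),
  and 1 - \<beta> > \<gamma> - \<beta>.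
\<close>

lemma ennreal_le_add_abs_diff:
  fixes x y :: real
  assumes "0 \<le> y"
  shows "ennreal x \<le> ennreal y + ennreal \<bar>x - y\<bar>"
  using assms by (simp flip: ennreal_plus add: ennreal_leI)

lemma ennreal_abs_diff_le:
  fixes a b c :: ennreal
  assumes "a \<noteq> \<top>" "b \<noteq> \<top>" "a \<le> b + c" "b \<le> a + c"
  shows "ennreal \<bar>enn2real a - enn2real b\<bar> \<le> c"
proof (cases c)
  case (real c')
  obtain a' b' where a: "a = ennreal a'" "0 \<le> a'" and b: "b = ennreal b'" "0 \<le> b'"
    using assms(1,2) by (cases a; cases b) auto
  have "a' \<le> b' + c'" "b' \<le> a' + c'"
    using assms(3,4) a b real by (simp_all flip: ennreal_plus)
  then show ?thesis
    using a(2) b(2) unfolding a(1) b(1) real by (intro ennreal_leI) (auto simp: abs_le_iff)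
qed simp

lemma abs_convex_comb_diff_le:
  fixes lam p q :: real
  assumes "0 \<le> p" "0 \<le> q" "lam \<le> 1"
  shows "\<bar>(1 - lam) * p + lam * q - q\<bar> \<le> (1 - lam) * p + (1 - lam) * q"
proof -
  have "(1 - lam) * p + lam * q - q = (1 - lam) * (p - q)"
    by (simp add: algebra_simps)
  then have "\<bar>(1 - lam) * p + lam * q - q\<bar> = (1 - lam) * \<bar>p - q\<bar>"
    using assms by (simp add: abs_mult)
  also have "\<dots> \<le> (1 - lam) * (p + q)"
    using assms by (intro mult_left_mono) auto
  finally show ?thesis
    by (simp add: distrib_left)
qed

lemma geometric_weights_sums:
  fixes lam :: real
  assumes "0 \<le> lam" "lam < 1"
  shows "(\<lambda>t. (1 - lam) * lam ^ t) sums 1"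
  using assms sums_mult[OF geometric_sums, of lam "1 - lam"] by simp

lemma suminf_geometric_weights_ennreal:
  fixes lam :: real
  assumes "0 \<le> lam" "lam < 1"
  shows "(\<Sum>t. ennreal ((1 - lam) * lam ^ t)) = 1"
proof -
  have "0 \<le> (1 - lam) * lam ^ t" for t
    using assms by simp
  from suminf_ennreal_eq[OF this geometric_weights_sums[OF assms]] show ?thesis
    by (simp only: ennreal_1)
qed

lemma of_nat_times_power_sums:
  fixes b :: real
  assumes "\<bar>b\<bar> < 1"
  shows "(\<lambda>k. real k * b ^ k) sums (b / (1 - b)\<^sup>2)"
proof -
  have "(\<lambda>n. b * (of_nat (Suc n) * b ^ n)) sums (b * (1 / (1 - b)\<^sup>2))"
    using assms by (intro sums_mult geometric_deriv_sums) simp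
  then have "(\<lambda>n. real (Suc n) * b ^ Suc n) sums (b / (1 - b)\<^sup>2)"
    by (simp add: algebra_simps)
  then show ?thesis by (subst (asm) sums_Suc_iff) simp
qed

lemma suminf_geometric_weights_of_nat_ennreal:
  fixes lam :: real
  assumes "0 \<le> lam" "lam < 1"
  shows "(\<Sum>k. ennreal ((1 - lam) * lam ^ k) * of_nat k) = ennreal (lam / (1 - lam))"
proof -
  have "(\<lambda>k. (1 - lam) * (real k * lam ^ k)) sums ((1 - lam) * (lam / (1 - lam)\<^sup>2))"
    using assms by (intro sums_mult of_nat_times_power_sums) simp
  moreover have "(1 - lam) * (lam / (1 - lam)\<^sup>2) = lam / (1 - lam)"
    using assms by (simp add: power2_eq_square)
  ultimately have "(\<lambda>k. (1 - lam) * lam ^ k * real k) sums (lam / (1 - lam))"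
    by (simp add: ac_simps)
  then have "(\<Sum>k. ennreal ((1 - lam) * lam ^ k * real k)) = ennreal (lam / (1 - lam))"
    using assms by (intro suminf_ennreal_eq) auto
  then show ?thesis
    using assms by (simp add: ennreal_mult ennreal_of_nat_eq_real_of_nat)
qed

lemma suminf_ennreal_split_head: "(\<Sum>n. f n) = f 0 + (\<Sum>n. f (Suc n) :: ennreal)"
  by (metis sums_Suc summableI summable_sums sums_unique add.commute)

text \<open>Convexity of \<open>\<bar>a - _\<bar>\<close> under a weighted average, stated in \<^typ>\<open>ennreal\<close> so that
  no summability of \<open>b\<close> is needed.\<close>

lemma ennreal_abs_diff_suminf_le:
  fixes w b :: "nat \<Rightarrow> real" and a :: real
  assumes "w sums 1" "\<And>k. 0 \<le> w k" "\<And>k. 0 \<le> b k" "0 \<le> a"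
    and fin: "(\<Sum>k. ennreal (w k) * ennreal (b k)) \<noteq> \<top>"
  shows "ennreal \<bar>a - enn2real (\<Sum>k. ennreal (w k) * ennreal (b k))\<bar>
           \<le> (\<Sum>k. ennreal (w k) * ennreal \<bar>a - b k\<bar>)"
proof -
  define B where "B = (\<Sum>k. ennreal (w k) * ennreal (b k))"
  define C where "C = (\<Sum>k. ennreal (w k) * ennreal \<bar>a - b k\<bar>)"
  have split: "(\<Sum>k. ennreal (w k) * (x k + y k)) = (\<Sum>k. ennreal (w k) * x k) + (\<Sum>k. ennreal (w k) * y k)"
    for x y :: "nat \<Rightarrow> ennreal"
    by (simp add: distrib_left suminf_add[OF summableI summableI])
  have "(\<Sum>k. ennreal (w k)) = 1"
    using suminf_ennreal_eq[OF assms(2,1)] by simp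
  then have a_eq: "ennreal a = (\<Sum>k. ennreal (w k) * ennreal a)"
    by simp
  also have "\<dots> \<le> (\<Sum>k. ennreal (w k) * (ennreal (b k) + ennreal \<bar>a - b k\<bar>))"
    by (intro suminf_le mult_left_mono ennreal_le_add_abs_diff assms) auto
  finally have upper_a: "ennreal a \<le> B + C"
    unfolding split B_def C_def .
  have "B \<le> (\<Sum>k. ennreal (w k) * (ennreal a + ennreal \<bar>b k - a\<bar>))"
    unfolding B_def by (intro suminf_le mult_left_mono ennreal_le_add_abs_diff assms) auto
  then have upper_B: "B \<le> ennreal a + C"
    unfolding split C_def abs_minus_commute[of "b _"] a_eq[symmetric] .
  show ?thesis
    using ennreal_abs_diff_le[OF _ _ upper_a upper_B] fin assms(4) by (simp add: B_def C_def)
qed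

definition prob_density :: "'b measure \<Rightarrow> ('b \<Rightarrow> real) \<Rightarrow> bool" where
  "prob_density M p \<longleftrightarrow>
     p \<in> borel_measurable M \<and> (\<forall>x. 0 \<le> p x) \<and> (\<integral>\<^sup>+x. ennreal (p x) \<partial>M) = 1"

definition l1_dist :: "'b measure \<Rightarrow> ('b \<Rightarrow> real) \<Rightarrow> ('b \<Rightarrow> real) \<Rightarrow> ennreal" where
  "l1_dist M p q = (\<integral>\<^sup>+x. ennreal \<bar>p x - q x\<bar> \<partial>M)"

lemma prob_densityD:
  assumes "prob_density M p"
  shows "p \<in> borel_measurable M" "0 \<le> p x" "(\<integral>\<^sup>+x. ennreal (p x) \<partial>M) = 1"
  using assms by (auto simp: prob_density_def)

lemma l1_dist_self [simp]: "l1_dist M p p = 0"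
  by (simp add: l1_dist_def)

lemma l1_dist_triangle:
  assumes [measurable]: "f \<in> borel_measurable M" "g \<in> borel_measurable M" "h \<in> borel_measurable M"
  shows "l1_dist M f h \<le> l1_dist M f g + l1_dist M g h"
proof -
  have "l1_dist M f h \<le> (\<integral>\<^sup>+x. ennreal \<bar>f x - g x\<bar> + ennreal \<bar>g x - h x\<bar> \<partial>M)"
    unfolding l1_dist_def by (intro nn_integral_mono) (simp flip: ennreal_plus add: ennreal_leI)
  also have "\<dots> = l1_dist M f g + l1_dist M g h"
    unfolding l1_dist_def by (rule nn_integral_add) measurable
  finally show ?thesis .
qed

lemma tv_dist_eq_l1_dist:
  assumes [measurable]: "p \<in> borel_measurable M" "q \<in> borel_measurable M"
  shows "tv_dist M p q = enn2real (l1_dist M p q) / 2"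
  by (simp add: tv_dist_def l1_dist_def integral_eq_nn_integral)

locale mdp =
  fixes S :: "'s measure" and A :: "'a measure" and pol :: "'s \<Rightarrow> 'a \<Rightarrow> real"
    and T :: "'s \<Rightarrow> 'a \<Rightarrow> 's \<Rightarrow> real"
  assumes sigma_finite_S: "sigma_finite_measure S" and sigma_finite_A: "sigma_finite_measure A"
    and pol_meas: "(\<lambda>(s, a). pol s a) \<in> borel_measurable (S \<Otimes>\<^sub>M A)"
    and pol_nonneg: "\<And>s a. pol s a \<ge> 0"
    and pol_norm: "\<And>s. s \<in> space S \<Longrightarrow> (\<integral>\<^sup>+ a. ennreal (pol s a) \<partial>A) = 1"
    and T_meas: "(\<lambda>((s, a), s'). T s a s') \<in> borel_measurable ((S \<Otimes>\<^sub>M A) \<Otimes>\<^sub>M S)"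
    and T_nonneg: "\<And>s a s'. T s a s' \<ge> 0"
    and T_norm: "\<And>s a. s \<in> space S \<Longrightarrow> a \<in> space A \<Longrightarrow> (\<integral>\<^sup>+ s'. ennreal (T s a s') \<partial>S) = 1"
begin

abbreviation SA :: "('s \<times> 'a) measure" where
  "SA \<equiv> S \<Otimes>\<^sub>M A"

abbreviation step :: "('s \<times> 'a \<Rightarrow> real) \<Rightarrow> 's \<times> 'a \<Rightarrow> real" where
  "step \<equiv> sa_step S A pol T"

abbreviation occ :: "real \<Rightarrow> ('s \<times> 'a \<Rightarrow> real) \<Rightarrow> 's \<times> 'a \<Rightarrow> real" where
  "occ \<equiv> occupancy S A pol T"

lemma pair_sigma_finite_SA: "pair_sigma_finite S A"
  using sigma_finite_S sigma_finite_A by (simp add: pair_sigma_finite_def)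

lemma sigma_finite_SA: "sigma_finite_measure SA"
  using sigma_finite_S sigma_finite_A by (rule sigma_finite_pair_measure)

definition trans_dens :: "('s \<times> 'a) \<times> 's \<Rightarrow> real" where
  "trans_dens z = T (fst (fst z)) (snd (fst z)) (snd z)"

definition pol_dens :: "'s \<times> 'a \<Rightarrow> real" where
  "pol_dens y = pol (fst y) (snd y)"

lemma measurable_trans_dens [measurable]: "trans_dens \<in> borel_measurable (SA \<Otimes>\<^sub>M S)"
proof -
  have "trans_dens = (\<lambda>((s, a), s'). T s a s')"
    by (auto simp: trans_dens_def fun_eq_iff)
  then show ?thesis using T_meas by simp
qed

lemma measurable_pol_dens [measurable]: "pol_dens \<in> borel_measurable SA"
proof -
  have "pol_dens = (\<lambda>(s, a). pol s a)"
    by (auto simp: pol_dens_def fun_eq_iff)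
  then show ?thesis using pol_meas by simp
qed

lemma trans_dens_nonneg [simp]: "0 \<le> trans_dens z"
  by (simp add: trans_dens_def T_nonneg)

lemma pol_dens_nonneg [simp]: "0 \<le> pol_dens y"
  by (simp add: pol_dens_def pol_nonneg)

lemma measurable_trans_dens_to:
  "y \<in> space SA \<Longrightarrow> (\<lambda>x. trans_dens (x, fst y)) \<in> borel_measurable SA"
  by (rule measurable_Pair1[OF measurable_trans_dens]) (auto simp: space_pair_measure)

text \<open>\<^const>\<open>sa_step\<close> and \<^const>\<open>occupancy\<close> apply \<^const>\<open>enn2real\<close> to nonnegative integrals
  and series, which destroys additivity where these are infinite. The argument therefore runs
  through the \<^typ>\<open>ennreal\<close>-valued operators \<open>step_nn\<close> and \<open>occupancy_nn\<close>, which are monotone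
  and countably additive, and returns to real values where they are finite, i.e. almost
  everywhere on probability densities.\<close>

definition step_nn :: "('s \<times> 'a \<Rightarrow> ennreal) \<Rightarrow> 's \<times> 'a \<Rightarrow> ennreal" where
  "step_nn h y = (\<integral>\<^sup>+x. h x * ennreal (trans_dens (x, fst y)) \<partial>SA) * ennreal (pol_dens y)"

lemma measurable_step_nn [measurable]:
  assumes [measurable]: "h \<in> borel_measurable SA"
  shows "step_nn h \<in> borel_measurable SA"
proof -
  interpret sigma_finite_measure SA by (rule sigma_finite_SA)
  have [measurable]: "(\<lambda>s'. \<integral>\<^sup>+x. h x * ennreal (trans_dens (x, s')) \<partial>SA) \<in> borel_measurable S"
    by (rule borel_measurable_nn_integral) measurable
  show ?thesis
    unfolding step_nn_def[abs_def] by measurable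
qed

lemma nn_integral_step_nn:
  assumes [measurable]: "h \<in> borel_measurable SA"
  shows "(\<integral>\<^sup>+y. step_nn h y \<partial>SA) = (\<integral>\<^sup>+x. h x \<partial>SA)"
proof -
  interpret SA: pair_sigma_finite S A by (rule pair_sigma_finite_SA)
  interpret SAS: pair_sigma_finite SA S
    using sigma_finite_SA sigma_finite_S by (simp add: pair_sigma_finite_def)
  define J where "J s' = (\<integral>\<^sup>+x. h x * ennreal (trans_dens (x, s')) \<partial>SA)" for s'
  have [measurable]: "J \<in> borel_measurable S"
    unfolding J_def by (rule SA.borel_measurable_nn_integral) measurable
  have "(\<integral>\<^sup>+y. step_nn h y \<partial>SA) = (\<integral>\<^sup>+s'. (\<integral>\<^sup>+a. J s' * ennreal (pol_dens (s', a)) \<partial>A) \<partial>S)"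
    unfolding step_nn_def J_def[symmetric]
    using SA.M2.nn_integral_fst[of "\<lambda>y. J (fst y) * ennreal (pol_dens y)" S, symmetric] by simp
  also have "\<dots> = (\<integral>\<^sup>+s'. J s' \<partial>S)"
  proof (rule nn_integral_cong)
    fix s' assume s': "s' \<in> space S"
    have "(\<integral>\<^sup>+a. J s' * ennreal (pol_dens (s', a)) \<partial>A) = J s' * (\<integral>\<^sup>+a. ennreal (pol_dens (s', a)) \<partial>A)"
      using measurable_Pair2[OF measurable_pol_dens s'] by (intro nn_integral_cmult) simp
    then show "(\<integral>\<^sup>+a. J s' * ennreal (pol_dens (s', a)) \<partial>A) = J s'"
      using pol_norm[OF s'] by (simp add: pol_dens_def)
  qed
  also have "\<dots> = (\<integral>\<^sup>+x. (\<integral>\<^sup>+s'. h x * ennreal (trans_dens (x, s')) \<partial>S) \<partial>SA)"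
    unfolding J_def by (rule SAS.Fubini') measurable
  also have "\<dots> = (\<integral>\<^sup>+x. h x \<partial>SA)"
  proof (rule nn_integral_cong)
    fix x assume x: "x \<in> space SA"
    have "(\<integral>\<^sup>+s'. h x * ennreal (trans_dens (x, s')) \<partial>S) = h x * (\<integral>\<^sup>+s'. ennreal (trans_dens (x, s')) \<partial>S)"
      using measurable_Pair2[OF measurable_trans_dens x] by (intro nn_integral_cmult) simp
    then show "(\<integral>\<^sup>+s'. h x * ennreal (trans_dens (x, s')) \<partial>S) = h x"
      using T_norm[of "fst x" "snd x"] x by (simp add: trans_dens_def space_pair_measure mem_Times_iff)
  qed
  finally show ?thesis .
qed

lemma step_nn_mono:
  assumes "\<And>x. h x \<le> g x"
  shows "step_nn h y \<le> step_nn g y"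
  unfolding step_nn_def using assms by (intro mult_right_mono nn_integral_mono) auto

lemma step_nn_add:
  assumes [measurable]: "h \<in> borel_measurable SA" "g \<in> borel_measurable SA"
    and y: "y \<in> space SA"
  shows "step_nn (\<lambda>x. h x + g x) y = step_nn h y + step_nn g y"
proof -
  note measurable_trans_dens_to[OF y, measurable]
  have "(\<integral>\<^sup>+x. (h x + g x) * ennreal (trans_dens (x, fst y)) \<partial>SA)
      = (\<integral>\<^sup>+x. h x * ennreal (trans_dens (x, fst y)) \<partial>SA) + (\<integral>\<^sup>+x. g x * ennreal (trans_dens (x, fst y)) \<partial>SA)"
    unfolding distrib_right by (rule nn_integral_add) measurable
  then show ?thesis
    by (simp add: step_nn_def distrib_right)
qed

lemma step_nn_cmult:
  assumes [measurable]: "h \<in> borel_measurable SA" and y: "y \<in> space SA"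
  shows "step_nn (\<lambda>x. c * h x) y = c * step_nn h y"
proof -
  note measurable_trans_dens_to[OF y, measurable]
  have "(\<integral>\<^sup>+x. c * h x * ennreal (trans_dens (x, fst y)) \<partial>SA)
      = c * (\<integral>\<^sup>+x. h x * ennreal (trans_dens (x, fst y)) \<partial>SA)"
    unfolding mult.assoc by (rule nn_integral_cmult) measurable
  then show ?thesis
    by (simp add: step_nn_def mult.assoc)
qed

lemma step_nn_suminf:
  assumes [measurable]: "\<And>t. f t \<in> borel_measurable SA" and y: "y \<in> space SA"
  shows "step_nn (\<lambda>x. \<Sum>t. f t x) y = (\<Sum>t. step_nn (f t) y)"
proof -
  note measurable_trans_dens_to[OF y, measurable]
  have "(\<integral>\<^sup>+x. (\<Sum>t. f t x) * ennreal (trans_dens (x, fst y)) \<partial>SA)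
      = (\<Sum>t. \<integral>\<^sup>+x. f t x * ennreal (trans_dens (x, fst y)) \<partial>SA)"
    unfolding ennreal_suminf_multc[symmetric] by (rule nn_integral_suminf) measurable
  then show ?thesis
    by (simp add: step_nn_def)
qed

lemma step_nn_cong_AE:
  assumes "AE x in SA. h x = g x"
  shows "step_nn h y = step_nn g y"
  unfolding step_nn_def using assms by (intro arg_cong2[where f = "(*)"] nn_integral_cong_AE) auto

lemma sa_step_eq_step_nn: "step p y = enn2real (step_nn (\<lambda>x. ennreal (p x)) y)"
  by (cases y) (simp add: sa_step_def step_nn_def trans_dens_def pol_dens_def
      enn2real_mult ennreal_mult'' T_nonneg pol_nonneg)

lemma ennreal_step:
  "step_nn (\<lambda>x. ennreal (p x)) y \<noteq> \<top> \<Longrightarrow> ennreal (step p y) = step_nn (\<lambda>x. ennreal (p x)) y"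
  by (simp add: sa_step_eq_step_nn less_top)

lemma step_nonneg: "0 \<le> step p y"
  by (simp add: sa_step_eq_step_nn)

lemma measurable_step [measurable]:
  assumes [measurable]: "p \<in> borel_measurable SA"
  shows "step p \<in> borel_measurable SA"
  unfolding sa_step_eq_step_nn[abs_def] by measurable

lemma AE_step_nn_finite:
  assumes "prob_density SA p"
  shows "AE y in SA. step_nn (\<lambda>x. ennreal (p x)) y \<noteq> \<top>"
proof -
  have [measurable]: "p \<in> borel_measurable SA"
    by (rule prob_densityD(1)[OF assms])
  have "(\<integral>\<^sup>+y. step_nn (\<lambda>x. ennreal (p x)) y \<partial>SA) = 1"
    using assms by (subst nn_integral_step_nn) (auto simp: prob_density_def)
  then show ?thesis
    using nn_integral_PInf_AE[of "step_nn (\<lambda>x. ennreal (p x))" SA] by simp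
qed

lemma prob_density_step:
  assumes "prob_density SA p"
  shows "prob_density SA (step p)"
proof -
  have [measurable]: "p \<in> borel_measurable SA"
    by (rule prob_densityD(1)[OF assms])
  have "(\<integral>\<^sup>+y. ennreal (step p y) \<partial>SA) = (\<integral>\<^sup>+y. step_nn (\<lambda>x. ennreal (p x)) y \<partial>SA)"
    using AE_step_nn_finite[OF assms] by (intro nn_integral_cong_AE) (auto elim: AE_mp simp: ennreal_step)
  also have "\<dots> = 1"
    using assms by (subst nn_integral_step_nn) (auto simp: prob_density_def)
  finally show ?thesis
    by (simp add: prob_density_def step_nonneg)
qed

lemma prob_density_funpow_step: "prob_density SA p \<Longrightarrow> prob_density SA ((step ^^ t) p)"
  by (induction t) (auto intro: prob_density_step)

lemma step_nn_le_add_abs_diff: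
  assumes [measurable]: "p \<in> borel_measurable SA" "q \<in> borel_measurable SA"
    and "\<And>x. 0 \<le> q x" and y: "y \<in> space SA"
  shows "step_nn (\<lambda>x. ennreal (p x)) y
           \<le> step_nn (\<lambda>x. ennreal (q x)) y + step_nn (\<lambda>x. ennreal \<bar>p x - q x\<bar>) y"
proof -
  have "step_nn (\<lambda>x. ennreal (p x)) y \<le> step_nn (\<lambda>x. ennreal (q x) + ennreal \<bar>p x - q x\<bar>) y"
    by (intro step_nn_mono ennreal_le_add_abs_diff assms)
  also have "\<dots> = step_nn (\<lambda>x. ennreal (q x)) y + step_nn (\<lambda>x. ennreal \<bar>p x - q x\<bar>) y"
    by (rule step_nn_add[OF _ _ y]) measurable
  finally show ?thesis .
qed

lemma abs_step_diff_le:
  assumes "prob_density SA p" "prob_density SA q" and y: "y \<in> space SA"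
    and "step_nn (\<lambda>x. ennreal (p x)) y \<noteq> \<top>" "step_nn (\<lambda>x. ennreal (q x)) y \<noteq> \<top>"
  shows "ennreal \<bar>step p y - step q y\<bar> \<le> step_nn (\<lambda>x. ennreal \<bar>p x - q x\<bar>) y"
proof -
  have [measurable]: "p \<in> borel_measurable SA" "q \<in> borel_measurable SA"
    and nonneg: "\<And>x. 0 \<le> p x" "\<And>x. 0 \<le> q x"
    using assms(1,2) by (auto simp: prob_density_def)
  have "step_nn (\<lambda>x. ennreal (p x)) y
          \<le> step_nn (\<lambda>x. ennreal (q x)) y + step_nn (\<lambda>x. ennreal \<bar>p x - q x\<bar>) y"
    and "step_nn (\<lambda>x. ennreal (q x)) y
          \<le> step_nn (\<lambda>x. ennreal (p x)) y + step_nn (\<lambda>x. ennreal \<bar>p x - q x\<bar>) y"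
    using step_nn_le_add_abs_diff[of p q, OF _ _ nonneg(2) y]
      step_nn_le_add_abs_diff[of q p, OF _ _ nonneg(1) y]
    by (simp_all add: abs_minus_commute)
  then show ?thesis
    unfolding sa_step_eq_step_nn by (intro ennreal_abs_diff_le assms(4,5))
qed

lemma l1_dist_step_le:
  assumes "prob_density SA p" "prob_density SA q"
  shows "l1_dist SA (step p) (step q) \<le> l1_dist SA p q"
proof -
  have [measurable]: "p \<in> borel_measurable SA" "q \<in> borel_measurable SA"
    using prob_densityD(1) assms by auto
  have "l1_dist SA (step p) (step q) \<le> (\<integral>\<^sup>+y. step_nn (\<lambda>x. ennreal \<bar>p x - q x\<bar>) y \<partial>SA)"
    unfolding l1_dist_def
    using AE_step_nn_finite[OF assms(1)] AE_step_nn_finite[OF assms(2)] AE_space[of SA]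
    by (intro nn_integral_mono_AE) (auto elim!: AE_mp intro: abs_step_diff_le[OF assms])
  also have "\<dots> = l1_dist SA p q"
    unfolding l1_dist_def by (rule nn_integral_step_nn) measurable
  finally show ?thesis .
qed

lemma l1_dist_funpow_step_le:
  assumes "prob_density SA p" "prob_density SA q"
  shows "l1_dist SA ((step ^^ k) p) ((step ^^ k) q) \<le> l1_dist SA p q"
proof (induction k)
  case (Suc k)
  have "l1_dist SA ((step ^^ Suc k) p) ((step ^^ Suc k) q) \<le> l1_dist SA ((step ^^ k) p) ((step ^^ k) q)"
    using l1_dist_step_le[OF prob_density_funpow_step[OF assms(1)] prob_density_funpow_step[OF assms(2)]]
    by simp
  then show ?case using Suc.IH by (rule order_trans)
qed simp

lemma l1_dist_funpow_step_self_le: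
  assumes "prob_density SA r"
  shows "l1_dist SA r ((step ^^ k) r) \<le> of_nat k * l1_dist SA r (step r)"
proof (induction k)
  case (Suc k)
  have m: "(step ^^ j) r \<in> borel_measurable SA" for j
    by (rule prob_densityD(1)[OF prob_density_funpow_step[OF assms]])
  have "l1_dist SA r ((step ^^ Suc k) r)
      \<le> l1_dist SA r ((step ^^ k) r) + l1_dist SA ((step ^^ k) r) ((step ^^ Suc k) r)"
    using l1_dist_triangle[OF m[of 0] m[of k] m[of "Suc k"]] by simp
  also have "\<dots> \<le> of_nat k * l1_dist SA r (step r) + l1_dist SA r (step r)"
  proof (rule add_mono)
    show "l1_dist SA ((step ^^ k) r) ((step ^^ Suc k) r) \<le> l1_dist SA r (step r)"
      using l1_dist_funpow_step_le[OF assms prob_density_step[OF assms], of k]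
      by (simp add: funpow_swap1)
  qed (rule Suc.IH)
  finally show ?case
    by (simp add: algebra_simps)
qed simp

definition occupancy_nn :: "real \<Rightarrow> ('s \<times> 'a \<Rightarrow> real) \<Rightarrow> 's \<times> 'a \<Rightarrow> ennreal" where
  "occupancy_nn lam p x = (\<Sum>t. ennreal ((1 - lam) * lam ^ t) * ennreal ((step ^^ t) p x))"

lemma occupancy_eq_occupancy_nn:
  assumes "prob_density SA p"
  shows "occ lam p x = enn2real (occupancy_nn lam p x)"
proof -
  have "0 \<le> (step ^^ t) p x" for t
    by (rule prob_densityD(2)[OF prob_density_funpow_step[OF assms]])
  then show ?thesis
    by (simp add: occupancy_def sa_dist_def occupancy_nn_def ennreal_mult'')
qed

lemma measurable_occupancy_nn:
  assumes "prob_density SA p"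
  shows "occupancy_nn lam p \<in> borel_measurable SA"
proof -
  have [measurable]: "(step ^^ t) p \<in> borel_measurable SA" for t
    by (rule prob_densityD(1)[OF prob_density_funpow_step[OF assms]])
  show ?thesis
    unfolding occupancy_nn_def[abs_def] by measurable
qed

lemma nn_integral_occupancy_nn:
  assumes "prob_density SA p" "0 \<le> lam" "lam < 1"
  shows "(\<integral>\<^sup>+x. occupancy_nn lam p x \<partial>SA) = 1"
proof -
  have dens: "prob_density SA ((step ^^ t) p)" for t
    using prob_density_funpow_step[OF assms(1)] .
  then have [measurable]: "(step ^^ t) p \<in> borel_measurable SA" for t
    by (rule prob_densityD(1))
  have "(\<integral>\<^sup>+x. occupancy_nn lam p x \<partial>SA)
      = (\<Sum>t. \<integral>\<^sup>+x. ennreal ((1 - lam) * lam ^ t) * ennreal ((step ^^ t) p x) \<partial>SA)"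
    unfolding occupancy_nn_def by (rule nn_integral_suminf) measurable
  also have "\<dots> = (\<Sum>t. ennreal ((1 - lam) * lam ^ t) * (\<integral>\<^sup>+x. ennreal ((step ^^ t) p x) \<partial>SA))"
    by (intro suminf_cong nn_integral_cmult) measurable
  also have "\<dots> = (\<Sum>t. ennreal ((1 - lam) * lam ^ t))"
    using prob_densityD(3)[OF dens] by simp
  also have "\<dots> = 1"
    by (rule suminf_geometric_weights_ennreal[OF assms(2,3)])
  finally show ?thesis .
qed

lemma AE_ennreal_occupancy:
  assumes "prob_density SA p" "0 \<le> lam" "lam < 1"
  shows "AE x in SA. ennreal (occ lam p x) = occupancy_nn lam p x"
proof -
  have "AE x in SA. occupancy_nn lam p x \<noteq> \<top>"
    using nn_integral_PInf_AE[OF measurable_occupancy_nn[OF assms(1)]]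
      nn_integral_occupancy_nn[OF assms] by simp
  then show ?thesis
    by eventually_elim (simp add: occupancy_eq_occupancy_nn[OF assms(1)] less_top)
qed

lemma prob_density_occupancy:
  assumes "prob_density SA p" "0 \<le> lam" "lam < 1"
  shows "prob_density SA (occ lam p)"
proof -
  note measurable_occupancy_nn[OF assms(1), measurable]
  have "occ lam p = (\<lambda>x. enn2real (occupancy_nn lam p x))"
    using occupancy_eq_occupancy_nn[OF assms(1)] by blast
  then have "occ lam p \<in> borel_measurable SA"
    by simp
  moreover have "(\<integral>\<^sup>+x. ennreal (occ lam p x) \<partial>SA) = 1"
    using nn_integral_cong_AE[OF AE_ennreal_occupancy[OF assms]] nn_integral_occupancy_nn[OF assms]
    by simp
  ultimately show ?thesis
    by (simp add: prob_density_def occupancy_eq_occupancy_nn[OF assms(1)])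
qed

lemma step_nn_occupancy_nn:
  assumes "prob_density SA p" and y: "y \<in> space SA"
  shows "step_nn (occupancy_nn lam p) y
           = (\<Sum>t. ennreal ((1 - lam) * lam ^ t) * step_nn (\<lambda>x. ennreal ((step ^^ t) p x)) y)"
proof -
  have [measurable]: "(step ^^ t) p \<in> borel_measurable SA" for t
    by (rule prob_densityD(1)[OF prob_density_funpow_step[OF assms(1)]])
  have "occupancy_nn lam p = (\<lambda>x. \<Sum>t. ennreal ((1 - lam) * lam ^ t) * ennreal ((step ^^ t) p x))"
    by (simp add: fun_eq_iff occupancy_nn_def)
  then have "step_nn (occupancy_nn lam p) y
      = (\<Sum>t. step_nn (\<lambda>x. ennreal ((1 - lam) * lam ^ t) * ennreal ((step ^^ t) p x)) y)"
    by (simp add: step_nn_suminf[OF _ y])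
  also have "\<dots> = (\<Sum>t. ennreal ((1 - lam) * lam ^ t) * step_nn (\<lambda>x. ennreal ((step ^^ t) p x)) y)"
    by (intro suminf_cong step_nn_cmult[OF _ y]) measurable
  finally show ?thesis .
qed

lemma occupancy_nn_unfold:
  assumes "0 \<le> lam" "lam \<le> 1"
  shows "occupancy_nn lam p y = ennreal (1 - lam) * ennreal (p y)
           + ennreal lam * (\<Sum>t. ennreal ((1 - lam) * lam ^ t) * ennreal ((step ^^ Suc t) p y))"
proof -
  define f where "f t = ennreal ((1 - lam) * lam ^ t) * ennreal ((step ^^ t) p y)" for t
  have "f (Suc t) = ennreal lam * (ennreal ((1 - lam) * lam ^ t) * ennreal ((step ^^ Suc t) p y))" for t
    using assms by (simp add: f_def ennreal_mult mult_ac)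
  moreover have "occupancy_nn lam p y = f 0 + (\<Sum>t. f (Suc t))"
    unfolding occupancy_nn_def f_def[symmetric] by (rule suminf_ennreal_split_head)
  ultimately show ?thesis
    by (simp add: f_def)
qed

lemma occupancy_fixpoint:
  assumes p: "prob_density SA p" and lam: "0 \<le> lam" "lam < 1"
  shows "AE y in SA. occ lam p y = (1 - lam) * p y + lam * step (occ lam p) y"
proof -
  have "AE y in SA. ennreal ((step ^^ Suc t) p y) = step_nn (\<lambda>x. ennreal ((step ^^ t) p x)) y" for t
    using AE_step_nn_finite[OF prob_density_funpow_step[OF p, of t]]
    by eventually_elim (simp add: ennreal_step)
  then have iterates: "AE y in SA. \<forall>t.
      ennreal ((step ^^ Suc t) p y) = step_nn (\<lambda>x. ennreal ((step ^^ t) p x)) y"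
    by (simp add: AE_all_countable)
  have occ_step: "AE y in SA. ennreal (step (occ lam p) y) = step_nn (occupancy_nn lam p) y"
    using AE_step_nn_finite[OF prob_density_occupancy[OF p lam]]
    by eventually_elim (simp add: ennreal_step step_nn_cong_AE[OF AE_ennreal_occupancy[OF p lam]])
  show ?thesis
    using iterates occ_step AE_ennreal_occupancy[OF p lam] AE_space
  proof eventually_elim
    case (elim y)
    have "ennreal (occ lam p y) = ennreal (1 - lam) * ennreal (p y)
        + ennreal lam * (\<Sum>t. ennreal ((1 - lam) * lam ^ t) * ennreal ((step ^^ Suc t) p y))"
      using lam by (simp add: elim(3) occupancy_nn_unfold)
    also have "\<dots> = ennreal (1 - lam) * ennreal (p y) + ennreal lam * ennreal (step (occ lam p) y)"
      using elim(1,2) by (simp add: step_nn_occupancy_nn[OF p elim(4)])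
    also have "\<dots> = ennreal ((1 - lam) * p y + lam * step (occ lam p) y)"
      using lam prob_densityD(2)[OF p] step_nonneg by (simp add: ennreal_mult ennreal_plus)
    finally show ?case
      using lam prob_densityD(2)[OF p] step_nonneg
      by (subst (asm) ennreal_inj) (auto simp: occupancy_eq_occupancy_nn[OF p])
  qed
qed

lemma l1_dist_occupancy_step_le:
  assumes p: "prob_density SA p" and lam: "0 \<le> lam" "lam < 1"
  shows "l1_dist SA (occ lam p) (step (occ lam p)) \<le> ennreal (2 * (1 - lam))"
proof -
  define r where "r = occ lam p"
  have dens: "prob_density SA (step r)"
    unfolding r_def by (intro prob_density_step prob_density_occupancy p lam)
  have [measurable]: "p \<in> borel_measurable SA" "step r \<in> borel_measurable SA"
    using prob_densityD(1) p dens by auto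
  have "AE y in SA. ennreal \<bar>r y - step r y\<bar>
      \<le> ennreal (1 - lam) * ennreal (p y) + ennreal (1 - lam) * ennreal (step r y)"
    using occupancy_fixpoint[OF p lam] unfolding r_def[symmetric]
  proof eventually_elim
    case (elim y)
    have nonneg: "0 \<le> p y" "0 \<le> step r y"
      using prob_densityD(2)[OF p] step_nonneg by auto
    have "\<bar>r y - step r y\<bar> \<le> (1 - lam) * p y + (1 - lam) * step r y"
      unfolding elim using nonneg lam by (intro abs_convex_comb_diff_le) auto
    then have "ennreal \<bar>r y - step r y\<bar> \<le> ennreal ((1 - lam) * p y + (1 - lam) * step r y)"
      by (rule ennreal_leI)
    then show ?case
      using lam nonneg by (simp add: ennreal_mult ennreal_plus)
  qed
  then have "l1_dist SA r (step r)
      \<le> (\<integral>\<^sup>+y. ennreal (1 - lam) * ennreal (p y) + ennreal (1 - lam) * ennreal (step r y) \<partial>SA)"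
    unfolding l1_dist_def by (rule nn_integral_mono_AE)
  also have "\<dots> = ennreal (1 - lam) * (\<integral>\<^sup>+y. ennreal (p y) \<partial>SA)
      + ennreal (1 - lam) * (\<integral>\<^sup>+y. ennreal (step r y) \<partial>SA)"
    by (simp add: nn_integral_add nn_integral_cmult)
  also have "\<dots> = ennreal (2 * (1 - lam))"
    using prob_densityD(3)[OF p] prob_densityD(3)[OF dens] lam
    by (simp add: ennreal_mult flip: ennreal_plus)
  finally show ?thesis
    unfolding r_def .
qed

lemma l1_dist_occupancy_le:
  assumes r: "prob_density SA r" and lam: "0 \<le> lam" "lam < 1"
  shows "l1_dist SA r (occ lam r) \<le> (\<Sum>k. ennreal ((1 - lam) * lam ^ k) * l1_dist SA r ((step ^^ k) r))"
proof -
  have dens: "prob_density SA ((step ^^ k) r)" for k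
    by (rule prob_density_funpow_step[OF r])
  have [measurable]: "(step ^^ k) r \<in> borel_measurable SA" for k
    using prob_densityD(1)[OF dens] .
  have [measurable]: "r \<in> borel_measurable SA"
    using prob_densityD(1)[OF r] .
  have "l1_dist SA r (occ lam r)
      \<le> (\<integral>\<^sup>+y. (\<Sum>k. ennreal ((1 - lam) * lam ^ k) * ennreal \<bar>r y - (step ^^ k) r y\<bar>) \<partial>SA)"
    unfolding l1_dist_def using AE_ennreal_occupancy[OF r lam]
  proof (intro nn_integral_mono_AE, eventually_elim)
    case (elim y)
    then have "occupancy_nn lam r y \<noteq> \<top>"
      by (metis ennreal_neq_top)
    then show ?case
      unfolding occupancy_eq_occupancy_nn[OF r] occupancy_nn_def
      using geometric_weights_sums[OF lam] lam prob_densityD(2)[OF dens] prob_densityD(2)[OF r]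
      by (intro ennreal_abs_diff_suminf_le) auto
  qed
  also have "\<dots> = (\<Sum>k. \<integral>\<^sup>+y. ennreal ((1 - lam) * lam ^ k) * ennreal \<bar>r y - (step ^^ k) r y\<bar> \<partial>SA)"
    by (rule nn_integral_suminf) measurable
  also have "\<dots> = (\<Sum>k. ennreal ((1 - lam) * lam ^ k) * l1_dist SA r ((step ^^ k) r))"
    unfolding l1_dist_def by (intro suminf_cong nn_integral_cmult) measurable
  finally show ?thesis .
qed

lemma l1_dist_occupancy_occupancy_le:
  assumes p: "prob_density SA p" and gamma: "0 \<le> gamma" "gamma < 1" and beta: "0 \<le> beta" "beta < 1"
  shows "l1_dist SA (occ gamma p) (occ beta (occ gamma p))
           \<le> ennreal (2 * ((1 - gamma) * beta / (1 - beta)))"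
proof -
  define r where "r = occ gamma p"
  have r: "prob_density SA r"
    unfolding r_def by (rule prob_density_occupancy[OF p gamma])
  have "l1_dist SA r (occ beta r) \<le> (\<Sum>k. ennreal ((1 - beta) * beta ^ k) * l1_dist SA r ((step ^^ k) r))"
    by (rule l1_dist_occupancy_le[OF r beta])
  also have "\<dots> \<le> (\<Sum>k. ennreal ((1 - beta) * beta ^ k) * (of_nat k * ennreal (2 * (1 - gamma))))"
  proof (intro suminf_le mult_left_mono summableI)
    fix k
    have "l1_dist SA r ((step ^^ k) r) \<le> of_nat k * l1_dist SA r (step r)"
      by (rule l1_dist_funpow_step_self_le[OF r])
    also have "\<dots> \<le> of_nat k * ennreal (2 * (1 - gamma))"
      unfolding r_def by (intro mult_left_mono l1_dist_occupancy_step_le[OF p gamma]) simp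
    finally show "l1_dist SA r ((step ^^ k) r) \<le> of_nat k * ennreal (2 * (1 - gamma))" .
  qed simp
  also have "\<dots> = (\<Sum>k. ennreal ((1 - beta) * beta ^ k) * of_nat k) * ennreal (2 * (1 - gamma))"
    by (simp only: ennreal_suminf_multc[symmetric] mult.assoc)
  also have "\<dots> = ennreal (beta / (1 - beta)) * ennreal (2 * (1 - gamma))"
    by (simp only: suminf_geometric_weights_of_nat_ennreal[OF beta])
  also have "\<dots> = ennreal (2 * ((1 - gamma) * beta / (1 - beta)))"
    using beta gamma by (simp flip: ennreal_mult add: field_simps)
  finally show ?thesis
    unfolding r_def .
qed

lemma prob_density_init_sa:
  assumes [measurable]: "alpha \<in> borel_measurable S"
    and alpha_nonneg: "\<And>s. 0 \<le> alpha s" and alpha_norm: "(\<integral>\<^sup>+s. ennreal (alpha s) \<partial>S) = 1"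
  shows "prob_density SA (init_sa alpha pol)"
proof -
  interpret SA: pair_sigma_finite S A by (rule pair_sigma_finite_SA)
  have p0_eq: "init_sa alpha pol = (\<lambda>x. alpha (fst x) * pol_dens x)"
    by (auto simp: init_sa_def pol_dens_def fun_eq_iff)
  have m [measurable]: "init_sa alpha pol \<in> borel_measurable SA"
    unfolding p0_eq by measurable
  have "(\<integral>\<^sup>+x. ennreal (init_sa alpha pol x) \<partial>SA) = (\<integral>\<^sup>+s. (\<integral>\<^sup>+a. ennreal (alpha s) * ennreal (pol_dens (s, a)) \<partial>A) \<partial>S)"
    using SA.M2.nn_integral_fst[of "\<lambda>x. ennreal (init_sa alpha pol x)" S]
    by (simp add: p0_eq ennreal_mult'')
  also have "\<dots> = (\<integral>\<^sup>+s. ennreal (alpha s) \<partial>S)"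
  proof (rule nn_integral_cong)
    fix s assume s: "s \<in> space S"
    have "(\<integral>\<^sup>+a. ennreal (alpha s) * ennreal (pol_dens (s, a)) \<partial>A) = ennreal (alpha s) * (\<integral>\<^sup>+a. ennreal (pol_dens (s, a)) \<partial>A)"
      using measurable_Pair2[OF measurable_pol_dens s] by (intro nn_integral_cmult) simp
    then show "(\<integral>\<^sup>+a. ennreal (alpha s) * ennreal (pol_dens (s, a)) \<partial>A) = ennreal (alpha s)"
      using pol_norm[OF s] by (simp add: pol_dens_def)
  qed
  finally show ?thesis
    using m alpha_norm alpha_nonneg pol_nonneg by (auto simp: prob_density_def init_sa_def)
qed

end

theorem lemma2:
  fixes S :: "'s measure" and A :: "'a measure"
    and alpha :: "'s \<Rightarrow> real" and pol :: "'s \<Rightarrow> 'a \<Rightarrow> real"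
    and T :: "'s \<Rightarrow> 'a \<Rightarrow> 's \<Rightarrow> real" and beta gamma :: real
  assumes "sigma_finite_measure S" and "sigma_finite_measure A"
    and alpha_meas: "alpha \<in> borel_measurable S"
    and alpha_nonneg: "\<And>s. alpha s \<ge> 0"
    and alpha_norm: "(\<integral>\<^sup>+ s. ennreal (alpha s) \<partial>S) = 1"
    and pol_meas: "(\<lambda>(s, a). pol s a) \<in> borel_measurable (S \<Otimes>\<^sub>M A)"
    and pol_nonneg: "\<And>s a. pol s a \<ge> 0"
    and pol_norm: "\<And>s. s \<in> space S \<Longrightarrow> (\<integral>\<^sup>+ a. ennreal (pol s a) \<partial>A) = 1"
    and T_meas: "(\<lambda>((s, a), s'). T s a s') \<in> borel_measurable ((S \<Otimes>\<^sub>M A) \<Otimes>\<^sub>M S)"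
    and T_nonneg: "\<And>s a s'. T s a s' \<ge> 0"
    and T_norm: "\<And>s a. s \<in> space S \<Longrightarrow> a \<in> space A \<Longrightarrow> (\<integral>\<^sup>+ s'. ennreal (T s a s') \<partial>S) = 1"
    and "0 < beta" and "beta < gamma" and "gamma < 1"
  shows "tv_dist (S \<Otimes>\<^sub>M A)
           (occupancy S A pol T gamma (init_sa alpha pol))
           (occupancy S A pol T beta (occupancy S A pol T gamma (init_sa alpha pol)))
         \<le> (1 - gamma) * beta / (gamma - beta)"
proof -
  interpret mdp S A pol T
    using assms by (simp add: mdp_def)
  define r where "r = occ gamma (init_sa alpha pol)"
  have p0: "prob_density SA (init_sa alpha pol)"
    using alpha_meas alpha_nonneg alpha_norm by (rule prob_density_init_sa)
  have gamma: "0 \<le> gamma" "gamma < 1" and beta: "0 \<le> beta" "beta < 1"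
    using assms by auto
  have r: "prob_density SA r"
    unfolding r_def by (rule prob_density_occupancy[OF p0 gamma])
  have "tv_dist SA r (occ beta r) = enn2real (l1_dist SA r (occ beta r)) / 2"
    using prob_densityD(1)[OF r] prob_densityD(1)[OF prob_density_occupancy[OF r beta]]
    by (rule tv_dist_eq_l1_dist)
  also have "\<dots> \<le> (1 - gamma) * beta / (1 - beta)"
  proof -
    have "enn2real (l1_dist SA r (occ beta r)) \<le> 2 * ((1 - gamma) * beta / (1 - beta))"
      using enn2real_mono[OF l1_dist_occupancy_occupancy_le[OF p0 gamma beta] ennreal_less_top]
        gamma beta by (simp add: r_def)
    then show ?thesis
      by linarith
  qed
  also have "\<dots> \<le> (1 - gamma) * beta / (gamma - beta)"
    using assms by (intro divide_left_mono) auto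
  finally show ?thesis
    by (simp add: r_def)
qed

end
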